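(* For every $\alpha\ge 1$ there exists a chore allocation instance (with three agents and monotone cost functions) that admits a maximin share fair allocation but admits no $\alpha$-EFX allocation. That is, the existence of an MMS allocation does not imply the existence of an $\alpha$-EFX allocation for any $\alpha \ge 1$.
   Context: A chore allocation instance consists of a set $N=\{1,\dots,n\}$ of agents, a finite set $M$ of chores, and for each agent $i$ a normalized ($c_i(\emptyset)=0$), monotone ($c_i(S\cup\{e\})\ge c_i(S)$) cost function $c_i:2^M\to\mathbb{R}_{\ge0}$. An allocation is a partition $X=(X_1,\dots,X_n)$ of $M$ with agent $i$ receiving $X_i$. For $\alpha\ge1$, $X$ is $\alpha$-EFX if for all agents $i,j$ and every $e\in X_i$, $c_i(X_i\setminus\{e\})\le\alpha\cdot c_i(X_j)$. The maximin share of agent $i$ is $\mu_i^n(M)=\min_{Y\in\Pi_n(M)}\max_{k\in[n]} c_i(Y_k)$, where $\Pi_n(M)$ is the set of partitions of $M$ into $n$ bundles; an allocation $X$ is maximin share fair (MMS) if $c_i(X_i)\le \mu_i^n(M)$ for every agent $i$. *)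

theory Defs
  imports Complex_Main
begin

text \<open>An allocation/partition into n bundles is a function X from agent indices to bundles
  (only the values on {..<n} matter), with bundles pairwise disjoint and covering M.
  Empty bundles are allowed.\<close>

definition is_partition :: "nat \<Rightarrow> 'c set \<Rightarrow> (nat \<Rightarrow> 'c set) \<Rightarrow> bool" where
  "is_partition n M X \<longleftrightarrow>
     (\<forall>i<n. X i \<subseteq> M) \<and> (\<Union>i<n. X i) = M \<and>
     (\<forall>i<n. \<forall>j<n. i \<noteq> j \<longrightarrow> X i \<inter> X j = {})"

definition valid_cost :: "'c set \<Rightarrow> ('c set \<Rightarrow> real) \<Rightarrow> bool" where
  "valid_cost M c \<longleftrightarrow> c {} = 0 \<and> (\<forall>S \<subseteq> M. c S \<ge> 0) \<and>
     (\<forall>S e. S \<subseteq> M \<longrightarrow> e \<in> M \<longrightarrow> c (insert e S) \<ge> c S)"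

definition chore_instance :: "nat \<Rightarrow> 'c set \<Rightarrow> (nat \<Rightarrow> 'c set \<Rightarrow> real) \<Rightarrow> bool" where
  "chore_instance n M c \<longleftrightarrow> finite M \<and> (\<forall>i<n. valid_cost M (c i))"

definition alpha_EFX :: "real \<Rightarrow> nat \<Rightarrow> (nat \<Rightarrow> 'c set \<Rightarrow> real) \<Rightarrow> (nat \<Rightarrow> 'c set) \<Rightarrow> bool" where
  "alpha_EFX \<alpha> n c X \<longleftrightarrow>
     (\<forall>i<n. \<forall>j<n. \<forall>e\<in>X i. c i (X i - {e}) \<le> \<alpha> * c i (X j))"

definition mms :: "nat \<Rightarrow> 'c set \<Rightarrow> ('c set \<Rightarrow> real) \<Rightarrow> real" where
  "mms n M ci = Min {Max ((\<lambda>k. ci (Y k)) ` {..<n}) | Y. is_partition n M Y}"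

definition is_MMS :: "nat \<Rightarrow> 'c set \<Rightarrow> (nat \<Rightarrow> 'c set \<Rightarrow> real) \<Rightarrow> (nat \<Rightarrow> 'c set) \<Rightarrow> bool" where
  "is_MMS n M c X \<longleftrightarrow> (\<forall>i<n. c i (X i) \<le> mms n M (c i))"

end

theory Submission imports Defs begin

text \<open>Each agent's cost of a bundle only depends on its level in 0..3, determined by which
  of finitely many generating bundles it contains, and levels 0, 1, 2, 3 cost 0, 1, 2a, 4a^2.
  Consecutive costs differ by a factor 2a > a, so a-EFX forces the ordinal condition that
  removing any chore from an agent's bundle brings it down to the level of every other
  bundle; an exhaustive check over the 3^6 allocations of the six chores shows that no
  allocation meets it. On the other hand, any three bundles covering the chores 0, 1, 2, 4
  put two of them together, which lifts agent 0 to the top level; so agent 0's maximin share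
  is her cost of all chores, and giving her everything is MMS.\<close>

definition level_value :: "real \<Rightarrow> nat \<Rightarrow> real" where
  "level_value a k = (if k = 0 then 0 else (2 * a) ^ (k - 1))"

lemma level_value_nonneg: "1 \<le> a \<Longrightarrow> 0 \<le> level_value a k"
  by (simp add: level_value_def)

lemma level_value_mono:
  assumes "1 \<le> a" "k \<le> l"
  shows "level_value a k \<le> level_value a l"
proof (cases "k = 0")
  case False
  then have "(2 * a) ^ (k - 1) \<le> (2 * a) ^ (l - 1)"
    using assms by (intro power_increasing) auto
  then show ?thesis unfolding level_value_def using False assms(2) by simp
qed (use assms(1) in \<open>simp add: level_value_def\<close>)

lemma level_value_gap:
  assumes "1 \<le> a" "l < k"
  shows "a * level_value a l < level_value a k"
proof -
  have "a * level_value a l < (2 * a) ^ l"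
  proof (cases l)
    case (Suc l')
    then show ?thesis using assms(1) by (simp add: level_value_def)
  qed (use assms(1) in \<open>simp add: level_value_def\<close>)
  also have "\<dots> \<le> (2 * a) ^ (k - 1)"
    using assms by (intro power_increasing) auto
  also have "\<dots> = level_value a k"
    using assms(2) by (simp add: level_value_def)
  finally show ?thesis .
qed

lemma valid_cost_level_value:
  assumes "1 \<le> a" "mono lev" "lev {} = 0"
  shows "valid_cost M (\<lambda>S. level_value a (lev S))"
  unfolding valid_cost_def
  using assms level_value_nonneg level_value_mono monoD[OF assms(2) subset_insertI]
  by (simp add: level_value_def)

definition ordinal_EFX :: "(nat \<Rightarrow> 'c set \<Rightarrow> nat) \<Rightarrow> nat \<Rightarrow> (nat \<Rightarrow> 'c set) \<Rightarrow> bool" where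
  "ordinal_EFX lev n X \<longleftrightarrow>
     (\<forall>i\<in>{..<n}. \<forall>j\<in>{..<n}. \<forall>e\<in>X i. lev i (X i - {e}) \<le> lev i (X j))"

lemma ordinal_EFX_if_alpha_EFX_level_value:
  assumes "1 \<le> a" "alpha_EFX a n (\<lambda>i S. level_value a (lev i S)) X"
  shows "ordinal_EFX lev n X"
  using assms level_value_gap unfolding alpha_EFX_def ordinal_EFX_def by (meson lessThan_iff not_le)

lemma is_partition_all_to_first:
  "0 < n \<Longrightarrow> is_partition n M (\<lambda>k. if k = 0 then M else {})"
  unfolding is_partition_def by auto

lemma le_mms:
  assumes "finite (range ci)" "0 < n"
    and "\<And>Y. is_partition n M Y \<Longrightarrow> v \<le> Max ((\<lambda>k. ci (Y k)) ` {..<n})"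
  shows "v \<le> mms n M ci"
proof -
  let ?A = "{Max ((\<lambda>k. ci (Y k)) ` {..<n}) | Y. is_partition n M Y}"
  have "?A \<subseteq> range ci"
  proof
    fix v assume "v \<in> ?A"
    then obtain Y where "v = Max ((\<lambda>k. ci (Y k)) ` {..<n})" by blast
    moreover have "Max ((\<lambda>k. ci (Y k)) ` {..<n}) \<in> (\<lambda>k. ci (Y k)) ` {..<n}"
      using \<open>0 < n\<close> by (intro Max_in) auto
    ultimately show "v \<in> range ci" by blast
  qed
  then have "finite ?A" using assms(1) finite_subset by blast
  moreover have "?A \<noteq> {}" using is_partition_all_to_first[OF \<open>0 < n\<close>] by blast
  ultimately show ?thesis unfolding mms_def using assms(3) by (auto intro!: Min.boundedI)
qed

lemma mms_nonneg:
  assumes "valid_cost M ci" "finite (range ci)" "0 < n"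
  shows "0 \<le> mms n M ci"
proof (rule le_mms[OF assms(2,3)])
  fix Y assume "is_partition n M Y"
  then have "0 \<le> ci (Y 0)" using assms(1,3) by (simp add: is_partition_def valid_cost_def)
  also have "\<dots> \<le> Max ((\<lambda>k. ci (Y k)) ` {..<n})" using assms(3) by simp
  finally show "0 \<le> Max ((\<lambda>k. ci (Y k)) ` {..<n})" .
qed

lemma is_MMS_all_to_first:
  assumes "0 < n" "\<forall>i<n. valid_cost M (c i) \<and> finite (range (c i))"
    and "c 0 M \<le> mms n M (c 0)"
  shows "is_MMS n M c (\<lambda>k. if k = 0 then M else {})"
  unfolding is_MMS_def
proof (intro allI impI)
  fix i assume "i < n"
  show "c i (if i = 0 then M else {}) \<le> mms n M (c i)"
  proof (cases "i = 0")
    case False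
    have "c i {} = 0" using assms(2) \<open>i < n\<close> by (simp add: valid_cost_def)
    moreover have "0 \<le> mms n M (c i)"
      using assms(1,2) \<open>i < n\<close> by (intro mms_nonneg) auto
    ultimately show ?thesis using False by simp
  qed (use assms(3) in simp)
qed

definition bundle_of :: "nat list \<Rightarrow> nat \<Rightarrow> nat set" where
  "bundle_of g i = set (filter (\<lambda>e. g ! e = i) [0..<length g])"

lemma is_partition_obtains_assignment:
  assumes "is_partition n {..<m} X"
  obtains g where "g \<in> set (List.n_lists m [0..<n])" "\<forall>i<n. X i = bundle_of g i"
proof
  have bundles: "\<forall>i<n. X i \<subseteq> {..<m}" and cover: "(\<Union>i<n. X i) = {..<m}"
    and disjoint: "\<forall>i<n. \<forall>j<n. i \<noteq> j \<longrightarrow> X i \<inter> X j = {}"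
    using assms unfolding is_partition_def by blast+
  have unique: "j = i" if "i < n" "e \<in> X i" "j < n" "e \<in> X j" for i j e
    using disjoint that by blast
  have covered: "\<exists>i. i < n \<and> e \<in> X i" if "e < m" for e
  proof -
    have "e \<in> (\<Union>i<n. X i)" using cover that by simp
    then show ?thesis by blast
  qed
  define g where "g = map (\<lambda>e. SOME i. i < n \<and> e \<in> X i) [0..<m]"
  have length_g: "length g = m" by (simp add: g_def)
  have g_nth: "g ! e < n" "e \<in> X (g ! e)" if "e < m" for e
    using someI_ex[OF covered[OF that]] that by (simp_all add: g_def)
  show "g \<in> set (List.n_lists m [0..<n])"
    using g_nth by (auto simp: set_n_lists in_set_conv_nth length_g)
  show "\<forall>i<n. X i = bundle_of g i"
  proof (intro allI impI set_eqI)
    fix i e assume "i < n"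
    have "e \<in> X i \<longleftrightarrow> e < m \<and> g ! e = i"
    proof
      assume "e \<in> X i"
      with bundles \<open>i < n\<close> have "e < m" by blast
      with unique[OF \<open>i < n\<close> \<open>e \<in> X i\<close> g_nth] show "e < m \<and> g ! e = i" by blast
    next
      assume "e < m \<and> g ! e = i"
      with g_nth(2) show "e \<in> X i" by blast
    qed
    then show "e \<in> X i \<longleftrightarrow> e \<in> bundle_of g i" by (simp add: bundle_of_def length_g)
  qed
qed

definition generators :: "nat \<Rightarrow> nat \<Rightarrow> nat set list" where
  "generators i k = (if i = 0 then
      (if k = 1 then [{1},{2},{4},{3,5}] else if k = 2 then [{1},{2},{0,4},{3,5}]
       else [{0,1},{0,2},{1,2},{0,4},{1,4},{2,4},{3,5}])
    else if i = 1 then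
      (if k = 1 then [{1},{2},{3,4},{5}] else if k = 2 then [{1},{2},{3,4},{0,5}]
       else [{0,1},{0,2},{2,3},{2,4},{3,4},{0,5},{1,5}])
    else
      (if k = 1 then [{1},{2},{3},{4,5}] else if k = 2 then [{1},{2},{0,3},{4,5}]
       else [{0,1},{1,2},{0,3},{1,3},{2,3},{0,2,4},{1,5},{0,2,5},{4,5}]))"

definition reaches :: "nat \<Rightarrow> nat \<Rightarrow> nat set \<Rightarrow> bool" where
  "reaches i k S \<longleftrightarrow> (\<exists>G\<in>set (generators i k). G \<subseteq> S)"

definition level :: "nat \<Rightarrow> nat set \<Rightarrow> nat" where
  "level i S = (if reaches i 3 S then 3 else if reaches i 2 S then 2
     else if reaches i 1 S then 1 else 0)"

definition cost :: "real \<Rightarrow> nat \<Rightarrow> nat set \<Rightarrow> real" where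
  "cost a i S = level_value a (level i S)"

lemma mono_level: "mono (level i)"
proof (rule monoI)
  fix S T :: "nat set" assume "S \<subseteq> T"
  then have "reaches i k S \<Longrightarrow> reaches i k T" for k unfolding reaches_def by blast
  then show "level i S \<le> level i T" by (auto simp: level_def)
qed

lemma level_empty: "level i {} = 0"
  by (simp add: level_def reaches_def generators_def)

lemma level_le_3: "level i S \<le> 3"
  by (simp add: level_def)

lemma finite_range_cost: "finite (range (cost a i))"
proof (rule finite_subset)
  show "range (cost a i) \<subseteq> level_value a ` {..3}"
    using level_le_3 by (auto simp: cost_def)
qed simp

lemma chore_instance_cost: "1 \<le> a \<Longrightarrow> chore_instance 3 {..<6} (cost a)"
  unfolding chore_instance_def cost_def
  using valid_cost_level_value[OF _ mono_level level_empty] by blast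

lemma is_partition_obtains_top_level_0:
  assumes "is_partition 3 M Y" "{0, 1, 2, 4} \<subseteq> M"
  obtains k where "k < 3" "level 0 (Y k) = 3"
proof -
  have cover: "(\<Union>k<3. Y k) = M" using assms(1) unfolding is_partition_def by blast
  have covered: "\<exists>k<3. x \<in> Y k" if "x \<in> M" for x
  proof -
    have "x \<in> (\<Union>k<3. Y k)" using cover that by simp
    then show ?thesis by blast
  qed
  have "0 \<in> M" "1 \<in> M" "2 \<in> M" "4 \<in> M" using assms(2) by auto
  then obtain k0 k1 k2 k4 where k: "k0 < 3" "0 \<in> Y k0" "k1 < 3" "1 \<in> Y k1"
    "k2 < 3" "2 \<in> Y k2" "k4 < 3" "4 \<in> Y k4" using covered by meson
  have "k0 = k1 \<or> k0 = k2 \<or> k0 = k4 \<or> k1 = k2 \<or> k1 = k4 \<or> k2 = k4"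
    using k by linarith
  then obtain k where "k < 3" "reaches 0 3 (Y k)"
    using k unfolding reaches_def generators_def by (elim disjE) fastforce+
  then show thesis using that by (simp add: level_def)
qed

lemma cost_0_le_mms:
  assumes "1 \<le> a"
  shows "cost a 0 {..<6} \<le> mms 3 {..<6} (cost a 0)"
proof (rule le_mms[OF finite_range_cost])
  fix Y assume "is_partition 3 {..<6::nat} Y"
  then obtain k where k: "k < 3" "level 0 (Y k) = 3" by (rule is_partition_obtains_top_level_0) auto
  then have "cost a 0 {..<6} \<le> cost a 0 (Y k)"
    using level_le_3 level_value_mono[OF assms] by (simp add: cost_def)
  also have "\<dots> \<le> Max ((\<lambda>k. cost a 0 (Y k)) ` {..<3})" using k by simp
  finally show "cost a 0 {..<6} \<le> Max ((\<lambda>k. cost a 0 (Y k)) ` {..<3})" .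
qed simp

definition EFX_violation :: "nat list \<Rightarrow> nat \<times> nat \<Rightarrow> bool" where
  "EFX_violation g =
     (\<lambda>(e, j). level (g ! e) (bundle_of g j) < level (g ! e) (bundle_of g (g ! e) - {e}))"

text \<open>Searching with \<^const>\<open>find\<close> keeps the evaluation by \<open>code_simp\<close> fast: the
  simplifier evaluates the condition of its \<open>if\<close> first and stops at the first violation.\<close>

lemma every_assignment_has_EFX_violation:
  "list_all (\<lambda>g. find (EFX_violation g) (List.product [0..<6] [0..<3]) \<noteq> None)
     (List.n_lists 6 [0..<3])"
  by code_simp

lemma not_ordinal_EFX_bundle_of:
  assumes g: "g \<in> set (List.n_lists 6 [0..<3])"
  shows "\<not> ordinal_EFX level 3 (bundle_of g)"
proof -
  have "find (EFX_violation g) (List.product [0..<6] [0..<3]) \<noteq> None"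
    using every_assignment_has_EFX_violation g unfolding list_all_iff by blast
  then obtain e j where "e < 6" "j < 3" and violation:
    "level (g ! e) (bundle_of g j) < level (g ! e) (bundle_of g (g ! e) - {e})"
    unfolding find_None_iff set_product EFX_violation_def by auto
  have "e < length g" "set g \<subseteq> {..<3}"
    using g \<open>e < 6\<close> by (simp_all add: set_n_lists atLeast0LessThan)
  then have "g ! e \<in> {..<3}" by (meson nth_mem subsetD)
  have "e \<in> bundle_of g (g ! e)" using \<open>e < length g\<close> by (simp add: bundle_of_def)
  with \<open>g ! e \<in> {..<3}\<close> \<open>j < 3\<close> violation show ?thesis
    unfolding ordinal_EFX_def by (meson lessThan_iff leD)
qed

lemma ordinal_EFX_cong:
  "(\<And>i. i < n \<Longrightarrow> X i = Y i) \<Longrightarrow> ordinal_EFX lev n X = ordinal_EFX lev n Y"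
  by (simp add: ordinal_EFX_def)

lemma not_alpha_EFX_cost:
  assumes "1 \<le> a" "is_partition 3 {..<6} X"
  shows "\<not> alpha_EFX a 3 (cost a) X"
proof
  assume "alpha_EFX a 3 (cost a) X"
  then have "ordinal_EFX level 3 X"
    using ordinal_EFX_if_alpha_EFX_level_value[OF assms(1)] by (simp add: cost_def[abs_def])
  moreover obtain g where g: "g \<in> set (List.n_lists 6 [0..<3])" "\<forall>i<3. X i = bundle_of g i"
    using is_partition_obtains_assignment[OF assms(2)] by blast
  ultimately have "ordinal_EFX level 3 (bundle_of g)"
    using ordinal_EFX_cong[of 3 X "bundle_of g" level] by simp
  with not_ordinal_EFX_bundle_of[OF g(1)] show False by contradiction
qed

theorem corollary1:
  fixes \<alpha> :: real
  assumes "\<alpha> \<ge> 1"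
  shows "\<exists>(M :: nat set) (c :: nat \<Rightarrow> nat set \<Rightarrow> real).
           chore_instance 3 M c
         \<and> (\<exists>X. is_partition 3 M X \<and> is_MMS 3 M c X)
         \<and> \<not> (\<exists>X. is_partition 3 M X \<and> alpha_EFX \<alpha> 3 c X)"
proof -
  let ?M = "{..<6::nat}" and ?all_to_0 = "\<lambda>k. if k = 0 then {..<6::nat} else {}"
  have is_instance: "chore_instance 3 ?M (cost \<alpha>)" using chore_instance_cost[OF assms] .
  have "is_partition 3 ?M ?all_to_0" by (rule is_partition_all_to_first) simp
  moreover have "is_MMS 3 ?M (cost \<alpha>) ?all_to_0"
  proof (rule is_MMS_all_to_first)
    show "\<forall>i<3. valid_cost ?M (cost \<alpha> i) \<and> finite (range (cost \<alpha> i))"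
      using is_instance finite_range_cost by (simp add: chore_instance_def)
  qed (simp_all add: cost_0_le_mms[OF assms])
  moreover have "\<not> (\<exists>X. is_partition 3 ?M X \<and> alpha_EFX \<alpha> 3 (cost \<alpha>) X)"
    using not_alpha_EFX_cost[OF assms] by blast
  ultimately show ?thesis using is_instance by blast
qed

end
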